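(* A numerical semigroup $G$ is a $2$-permutation numerical semigroup if and only if $G$ is one of $$G_1=\langle 1,2\rangle=\mathbb{N},\qquad G_2=\langle 2,3\rangle=\{0\}\cup\{x\in\mathbb{N}: x\ge 2\},\qquad G_3=\langle 3,4\rangle=\{0,3,4\}\cup\{x\in\mathbb{N}:x\ge 6\}.$$
   Context: $\mathbb{N}=\{0,1,2,\dots\}$. A numerical semigroup is a submonoid $G$ of $(\mathbb{N},+,0)$ such that $\mathbb{N}\setminus G$ is finite; $\langle S\rangle$ denotes the submonoid of $\mathbb{N}$ generated by $S$. Write the elements of $G$ as $0=g_0<g_1<g_2<\cdots$. For a positive integer $n$, $G$ is called an $n$-permutation numerical semigroup if $G=\langle\{g_1,\dots,g_n\}\rangle$ and, for every $k\in\mathbb{N}$, the $n$-tuple $(g_{kn+1}\bmod n,\dots,g_{kn+n}\bmod n)$ contains exactly one representative of each residue class of $\mathbb{Z}/n\mathbb{Z}$. *)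

theory Defs
  imports Main "HOL-Library.Infinite_Set"
begin

inductive_set gen :: "nat set \<Rightarrow> nat set" for S :: "nat set" where
  gen_zero: "0 \<in> gen S"
| gen_add: "s \<in> S \<Longrightarrow> x \<in> gen S \<Longrightarrow> s + x \<in> gen S"

definition numerical_semigroup :: "nat set \<Rightarrow> bool" where
  "numerical_semigroup G \<longleftrightarrow>
     0 \<in> G \<and> (\<forall>x\<in>G. \<forall>y\<in>G. x + y \<in> G) \<and> finite (UNIV - G)"

text \<open>The i-th element g_i of G in increasing order (g_0 = 0).\<close>
definition elem :: "nat set \<Rightarrow> nat \<Rightarrow> nat" where
  "elem G i = enumerate G i"

definition perm_numerical_semigroup :: "nat \<Rightarrow> nat set \<Rightarrow> bool" where
  "perm_numerical_semigroup n G \<longleftrightarrow>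
     numerical_semigroup G \<and>
     G = gen (elem G ` {1..n}) \<and>
     (\<forall>k. bij_betw (\<lambda>i. elem G (k * n + i) mod n) {1..n} {0..<n})"

end

theory Submission
  imports Defs
begin

text \<open>A 2-permutation numerical semigroup is generated by its two smallest nonzero elements
  \<open>a < b\<close>; these are coprime, \<open>b \<le> 2 a\<close>, and each pair \<open>(g(2k+1), g(2k+2))\<close> consists of an
  even and an odd number. For \<open>a \<le> 3\<close> this leaves exactly \<open>(1, 2)\<close>, \<open>(2, 3)\<close>, \<open>(3, 4)\<close>. For
  \<open>a \<ge> 4\<close> the elements below \<open>5 a\<close> are the combinations \<open>i a + j b\<close> with \<open>i + j \<le> 4\<close>; ordering
  them gives \<open>{g 5, g 6} = {2 b, 3 a}\<close>, both even if \<open>a\<close> is even, while for odd \<open>a\<close> (so even \<open>b\<close>)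
  either \<open>(g 7, g 8) = (2 a + b, 4 a)\<close> or \<open>{g 9, g 10} = {4 a, 3 b}\<close> is a pair of even numbers.\<close>

lemma gen_pair_iff: "x \<in> gen {a, b} \<longleftrightarrow> (\<exists>i j. x = i * a + j * b)"
proof
  assume "x \<in> gen {a, b}"
  then show "\<exists>i j. x = i * a + j * b"
  proof (induction rule: gen.induct)
    case gen_zero
    show ?case by auto
  next
    case (gen_add s x)
    then obtain i j where "x = i * a + j * b" by blast
    moreover have "s + x = Suc i * a + j * b" if "s = a" using that \<open>x = i * a + j * b\<close> by simp
    moreover have "s + x = i * a + Suc j * b" if "s = b" using that \<open>x = i * a + j * b\<close> by simp
    ultimately show ?case using \<open>s \<in> {a, b}\<close> by blast
  qed
next
  assume "\<exists>i j. x = i * a + j * b"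
  then obtain i j where x: "x = i * a + j * b" by blast
  have "j * b \<in> gen {a, b}"
    by (induction j) (auto intro: gen.intros)
  then have "i * a + j * b \<in> gen {a, b}"
    by (induction i) (auto simp: add.assoc intro: gen.intros)
  with x show "x \<in> gen {a, b}" by simp
qed

lemma gen_pair_mem: "i * a + j * b \<in> gen {a, b}"
  using gen_pair_iff by blast

lemma gen_add_closed: "x \<in> gen S \<Longrightarrow> y \<in> gen S \<Longrightarrow> x + y \<in> gen S"
  by (induction rule: gen.induct) (auto simp: add.assoc intro: gen.intros)

lemma numerical_semigroup_genI: "finite (UNIV - gen S) \<Longrightarrow> numerical_semigroup (gen S)"
  unfolding numerical_semigroup_def by (auto intro: gen.intros gen_add_closed)

lemma numerical_semigroup_infinite: "numerical_semigroup G \<Longrightarrow> infinite G"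
  unfolding numerical_semigroup_def by (metis finite_Un Un_Diff_cancel2 Un_UNIV_left infinite_UNIV_nat)

lemma numerical_semigroup_gen_pair_coprime:
  assumes "numerical_semigroup (gen {a, b})"
  shows "coprime a b"
proof -
  have gcd_dvd: "gcd a b dvd x" if "x \<in> gen {a, b}" for x
    using that by (induction rule: gen.induct) auto
  have "finite (UNIV - gen {a, b})"
    using assms unfolding numerical_semigroup_def by blast
  then obtain m where "\<forall>x \<in> UNIV - gen {a, b}. x < m"
    unfolding finite_nat_set_iff_bounded by blast
  then have "x \<in> gen {a, b}" if "m \<le> x" for x
    using that by (meson DiffI UNIV_I not_le)
  then have "gcd a b dvd m" "gcd a b dvd m + 1"
    using gcd_dvd by simp_all
  then have "gcd a b dvd 1"
    by (metis dvd_add_right_iff)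
  then show ?thesis
    by (simp add: coprime_iff_gcd_eq_1)
qed

lemma elem_0: "0 \<in> S \<Longrightarrow> elem S 0 = 0"
  unfolding elem_def by (simp add: enumerate_0)

lemma elem_Suc_eqI:
  assumes "infinite S" "v \<in> S" "elem S n < v" "\<And>y. y \<in> S \<Longrightarrow> elem S n < y \<Longrightarrow> v \<le> y"
  shows "elem S (Suc n) = v"
  unfolding elem_def enumerate_Suc''[OF assms(1)]
  by (rule Least_equality) (use assms in \<open>auto simp: elem_def\<close>)

lemma elem_shift:
  assumes "elem S c = m" "{m..} \<subseteq> S"
  shows "elem S (c + n) = m + n"
proof (induction n)
  case 0
  show ?case using assms(1) by simp
next
  case (Suc n)
  have "infinite S" using assms(2) infinite_Ici infinite_super by blast
  then have "elem S (Suc (c + n)) = m + Suc n"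
    by (rule elem_Suc_eqI) (use Suc assms(2) in auto)
  then show ?case by simp
qed

lemma gen_pair_infinite: "0 < a \<Longrightarrow> infinite (gen {a, b})"
proof -
  assume "0 < a"
  then have "inj (\<lambda>i. i * a)" by (simp add: inj_on_def)
  moreover have "range (\<lambda>i. i * a) \<subseteq> gen {a, b}"
    using gen_pair_mem[of _ a 0 b] by auto
  ultimately show ?thesis by (meson infinite_super range_inj_infinite)
qed

lemma all_sum_le_4_iff:
  "(\<forall>i j. i + j \<le> (4::nat) \<longrightarrow> P i j) \<longleftrightarrow>
    P 0 0 \<and> P 0 1 \<and> P 0 2 \<and> P 0 3 \<and> P 0 4 \<and> P 1 0 \<and> P 1 1 \<and> P 1 2 \<and> P 1 3 \<and>
    P 2 0 \<and> P 2 1 \<and> P 2 2 \<and> P 3 0 \<and> P 3 1 \<and> P 4 0"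
proof safe
  fix i j :: nat
  assume "i + j \<le> 4" and P: "P 0 0" "P 0 1" "P 0 2" "P 0 3" "P 0 4" "P 1 0" "P 1 1" "P 1 2" "P 1 3"
    "P 2 0" "P 2 1" "P 2 2" "P 3 0" "P 3 1" "P 4 0"
  then have "i \<le> 4" "j \<le> 4 - i" by simp_all
  then show "P i j"
    using P by (auto simp: le_Suc_eq numeral_eq_Suc)
qed auto

text \<open>For \<open>a \<le> b\<close>, elements of \<open>gen {a, b}\<close> below \<open>5 a\<close> are combinations \<open>i a + j b\<close> with
  \<open>i + j \<le> 4\<close>, so the successor of an element below \<open>5 a\<close> is found among these finitely many
  candidates.\<close>

lemma elem_gen_pair_Suc:
  assumes "0 < a" "a \<le> b" "elem (gen {a, b}) n = x"
    and "x < p * a + q * b" "p * a + q * b < 5 * a"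
    and "\<forall>i j. i + j \<le> 4 \<longrightarrow> x < i * a + j * b \<longrightarrow> p * a + q * b \<le> i * a + j * b"
  shows "elem (gen {a, b}) (Suc n) = p * a + q * b"
proof (rule elem_Suc_eqI)
  fix y
  assume "y \<in> gen {a, b}" "elem (gen {a, b}) n < y"
  then obtain i j where y: "y = i * a + j * b" "x < y"
    using assms(3) gen_pair_iff by metis
  show "p * a + q * b \<le> y"
  proof (cases "i + j \<le> 4")
    case True
    then show ?thesis using assms(6) y by blast
  next
    case False
    then have "5 * a \<le> (i + j) * a" by simp
    also have "\<dots> \<le> y" using assms(2) y(1) by (simp add: distrib_right)
    finally show ?thesis using assms(5) by simp
  qed
qed (use assms gen_pair_infinite gen_pair_mem in auto)

lemma elem_gen_pair_1_2:
  assumes "0 < a" "a < b"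
  shows "elem (gen {a, b}) 1 = a" "elem (gen {a, b}) 2 = min b (2 * a)"
proof -
  have e0: "elem (gen {a, b}) 0 = 0"
    by (simp add: elem_0 gen.gen_zero)
  have "elem (gen {a, b}) (Suc 0) = 1 * a + 0 * b"
    by (rule elem_gen_pair_Suc) (use assms e0 in \<open>auto simp: all_sum_le_4_iff\<close>)
  then show e1: "elem (gen {a, b}) 1 = a" by simp
  show "elem (gen {a, b}) 2 = min b (2 * a)"
  proof (cases "b < 2 * a")
    case True
    have "elem (gen {a, b}) (Suc 1) = 0 * a + 1 * b"
      by (rule elem_gen_pair_Suc) (use assms e1 True in \<open>auto simp: all_sum_le_4_iff\<close>)
    then show ?thesis using True by (simp add: numeral_2_eq_2)
  next
    case False
    have "elem (gen {a, b}) (Suc 1) = 2 * a + 0 * b"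
      by (rule elem_gen_pair_Suc) (use assms e1 False in \<open>auto simp: all_sum_le_4_iff\<close>)
    then show ?thesis using False by (simp add: numeral_2_eq_2)
  qed
qed

lemma elem_gen_pair_3_4:
  assumes "a < b" "b < 2 * a"
  shows "elem (gen {a, b}) 3 = 2 * a" "elem (gen {a, b}) 4 = a + b"
proof -
  have "0 < a" using assms by simp
  have e2: "elem (gen {a, b}) 2 = b"
    using elem_gen_pair_1_2 assms \<open>0 < a\<close> by simp
  have "elem (gen {a, b}) (Suc 2) = 2 * a + 0 * b"
    by (rule elem_gen_pair_Suc) (use assms \<open>0 < a\<close> e2 in \<open>auto simp: all_sum_le_4_iff\<close>)
  then show e3: "elem (gen {a, b}) 3 = 2 * a" by simp
  have "elem (gen {a, b}) (Suc 3) = 1 * a + 1 * b"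
    by (rule elem_gen_pair_Suc) (use assms \<open>0 < a\<close> e3 in \<open>auto simp: all_sum_le_4_iff\<close>)
  then show "elem (gen {a, b}) 4 = a + b" by simp
qed

lemma elem_gen_pair_5_to_8_if_less:
  assumes "a < b" "2 * b < 3 * a"
  shows "elem (gen {a, b}) 5 = 2 * b" "elem (gen {a, b}) 6 = 3 * a"
    "elem (gen {a, b}) 7 = 2 * a + b" "elem (gen {a, b}) 8 = a + 2 * b"
proof -
  let ?e = "elem (gen {a, b})"
  have "0 < a" "b < 2 * a" using assms by simp_all
  then have e4: "?e 4 = a + b" using elem_gen_pair_3_4 assms by simp
  have e5: "?e (Suc 4) = 0 * a + 2 * b"
    by (rule elem_gen_pair_Suc) (use assms \<open>0 < a\<close> e4 in \<open>auto simp: all_sum_le_4_iff\<close>)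
  have e6: "?e (Suc 5) = 3 * a + 0 * b"
    by (rule elem_gen_pair_Suc) (use assms \<open>0 < a\<close> e5 in \<open>auto simp: all_sum_le_4_iff\<close>)
  have e7: "?e (Suc 6) = 2 * a + 1 * b"
    by (rule elem_gen_pair_Suc) (use assms \<open>0 < a\<close> e6 in \<open>auto simp: all_sum_le_4_iff\<close>)
  have e8: "?e (Suc 7) = 1 * a + 2 * b"
    by (rule elem_gen_pair_Suc) (use assms \<open>0 < a\<close> e7 in \<open>auto simp: all_sum_le_4_iff\<close>)
  from e5 e6 e7 e8 show "?e 5 = 2 * b" "?e 6 = 3 * a" "?e 7 = 2 * a + b" "?e 8 = a + 2 * b"
    by simp_all
qed

lemma elem_gen_pair_5_to_8_if_greater:
  assumes "a < b" "b < 2 * a" "3 * a < 2 * b"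
  shows "elem (gen {a, b}) 5 = 3 * a" "elem (gen {a, b}) 6 = 2 * b"
    "elem (gen {a, b}) 7 = 2 * a + b" "elem (gen {a, b}) 8 = 4 * a"
proof -
  let ?e = "elem (gen {a, b})"
  have "0 < a" using assms by simp
  have e4: "?e 4 = a + b" using elem_gen_pair_3_4 assms by simp
  have e5: "?e (Suc 4) = 3 * a + 0 * b"
    by (rule elem_gen_pair_Suc) (use assms \<open>0 < a\<close> e4 in \<open>auto simp: all_sum_le_4_iff\<close>)
  have e6: "?e (Suc 5) = 0 * a + 2 * b"
    by (rule elem_gen_pair_Suc) (use assms \<open>0 < a\<close> e5 in \<open>auto simp: all_sum_le_4_iff\<close>)
  have e7: "?e (Suc 6) = 2 * a + 1 * b"
    by (rule elem_gen_pair_Suc) (use assms \<open>0 < a\<close> e6 in \<open>auto simp: all_sum_le_4_iff\<close>)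
  have e8: "?e (Suc 7) = 4 * a + 0 * b"
    by (rule elem_gen_pair_Suc) (use assms \<open>0 < a\<close> e7 in \<open>auto simp: all_sum_le_4_iff\<close>)
  from e5 e6 e7 e8 show "?e 5 = 3 * a" "?e 6 = 2 * b" "?e 7 = 2 * a + b" "?e 8 = 4 * a"
    by simp_all
qed

lemma elem_gen_pair_9_10:
  assumes "a < b" "2 * b < 3 * a" "4 * a \<noteq> 3 * b"
  shows "{elem (gen {a, b}) 9, elem (gen {a, b}) 10} = {4 * a, 3 * b}"
proof -
  let ?e = "elem (gen {a, b})"
  have "0 < a" using assms by simp
  have e8: "?e 8 = a + 2 * b" using elem_gen_pair_5_to_8_if_less assms by simp
  consider (less) "4 * a < 3 * b" | (greater) "3 * b < 4 * a" using assms(3) by linarith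
  then show ?thesis
  proof cases
    case less
    have e9: "?e (Suc 8) = 4 * a + 0 * b"
      by (rule elem_gen_pair_Suc) (use assms \<open>0 < a\<close> e8 less in \<open>auto simp: all_sum_le_4_iff\<close>)
    have "?e (Suc 9) = 0 * a + 3 * b"
      by (rule elem_gen_pair_Suc) (use assms \<open>0 < a\<close> e9 less in \<open>auto simp: all_sum_le_4_iff\<close>)
    with e9 show ?thesis by simp
  next
    case greater
    have e9: "?e (Suc 8) = 0 * a + 3 * b"
      by (rule elem_gen_pair_Suc) (use assms \<open>0 < a\<close> e8 greater in \<open>auto simp: all_sum_le_4_iff\<close>)
    have "?e (Suc 9) = 4 * a + 0 * b"
      by (rule elem_gen_pair_Suc) (use assms \<open>0 < a\<close> e9 greater in \<open>auto simp: all_sum_le_4_iff\<close>)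
    with e9 show ?thesis by auto
  qed
qed

lemma coprime_mult_eq_imp_le: "coprime a b \<Longrightarrow> m * b = n * a \<Longrightarrow> 0 < m \<Longrightarrow> a \<le> (m :: nat)"
  by (metis coprime_dvd_mult_left_iff dvd_imp_le dvd_triv_right)

lemma gen_pair_even_parity_fails:
  assumes "4 \<le> a" "even a" "a < b" "b < 2 * a" "coprime a b"
  shows "even (elem (gen {a, b}) 5 + elem (gen {a, b}) 6)"
proof -
  have "2 * b \<noteq> 3 * a"
    using coprime_mult_eq_imp_le[OF assms(5), of 2 3] assms(1) by auto
  then consider "2 * b < 3 * a" | "3 * a < 2 * b" by linarith
  then show ?thesis
    using elem_gen_pair_5_to_8_if_less elem_gen_pair_5_to_8_if_greater assms(2-4) by cases simp_all
qed

lemma gen_pair_odd_parity_fails: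
  assumes "4 \<le> a" "even b" "a < b" "b < 2 * a" "coprime a b"
  shows "even (elem (gen {a, b}) 7 + elem (gen {a, b}) 8) \<or>
    even (elem (gen {a, b}) 9 + elem (gen {a, b}) 10)"
proof (cases "2 * b < 3 * a")
  case True
  have "4 * a \<noteq> 3 * b"
    using coprime_mult_eq_imp_le[of b a 4 3] assms(1,3,5) by (auto simp: coprime_commute)
  then have "{elem (gen {a, b}) 9, elem (gen {a, b}) 10} = {4 * a, 3 * b}"
    using elem_gen_pair_9_10 True assms(3) by blast
  then show ?thesis using assms(2) by (auto simp: doubleton_eq_iff)
next
  case False
  have "2 * b \<noteq> 3 * a"
    using coprime_mult_eq_imp_le[OF assms(5), of 2 3] assms(1) by auto
  with False have "3 * a < 2 * b" by linarith
  then show ?thesis using elem_gen_pair_5_to_8_if_greater assms(2-4) by simp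
qed

lemma gen_pair_alternating_parity_cases:
  assumes "0 < a" "a < b" "b \<le> 2 * a" "coprime a b"
    and alt: "\<forall>k. odd (elem (gen {a, b}) (2 * k + 1) + elem (gen {a, b}) (2 * k + 2))"
  shows "a = 1 \<and> b = 2 \<or> a = 2 \<and> b = 3 \<or> a = 3 \<and> b = 4"
proof -
  have "elem (gen {a, b}) 1 = a" "elem (gen {a, b}) 2 = b"
    using elem_gen_pair_1_2 assms(1-3) by simp_all
  then have "odd (a + b)"
    using alt[rule_format, of 0] by (simp add: numeral_2_eq_2)
  have "b \<noteq> 2 * a" if "a \<noteq> 1"
    using coprime_mult_eq_imp_le[OF assms(4), of 1 2] assms(1) that by auto
  then have "a = 1 \<and> b = 2 \<or> a = 2 \<and> b = 3 \<or> a = 3 \<and> b = 4 \<or> 4 \<le> a \<and> b < 2 * a"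
    using assms(1-3) \<open>odd (a + b)\<close> by presburger
  then consider (small) "a = 1 \<and> b = 2 \<or> a = 2 \<and> b = 3 \<or> a = 3 \<and> b = 4"
    | (large) "4 \<le> a" "b < 2 * a"
    by blast
  then show ?thesis
  proof cases
    case small
    then show ?thesis .
  next
    case large
    show ?thesis
    proof (cases "even a")
      case True
      then have "even (elem (gen {a, b}) 5 + elem (gen {a, b}) 6)"
        using gen_pair_even_parity_fails large assms(2,4) by blast
      then show ?thesis using alt[rule_format, of 2] by simp
    next
      case False
      then have "even b" using \<open>odd (a + b)\<close> by simp
      then have "even (elem (gen {a, b}) 7 + elem (gen {a, b}) 8) \<or>
          even (elem (gen {a, b}) 9 + elem (gen {a, b}) 10)"
        using gen_pair_odd_parity_fails large assms(2,4) by blast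
      then show ?thesis using alt[rule_format, of 3] alt[rule_format, of 4] by auto
    qed
  qed
qed

lemma bij_betw_mod_2_iff:
  "bij_betw (\<lambda>i. f i mod 2) {1..2} {0..<2 :: nat} \<longleftrightarrow> odd (f 1 + f (2 :: nat))"
proof -
  have dom: "{1..2 :: nat} = {1, 2}" and cod: "{0..<2 :: nat} = {0, 1}" by auto
  have "bij_betw (\<lambda>i. f i mod 2) {1, 2} {0, 1} \<longleftrightarrow> f 1 mod 2 \<noteq> f 2 mod 2"
  proof
    assume "bij_betw (\<lambda>i. f i mod 2) {1, 2} {0, 1}"
    then show "f 1 mod 2 \<noteq> f 2 mod 2"
      unfolding bij_betw_def inj_on_def by fastforce
  next
    assume neq: "f 1 mod 2 \<noteq> f 2 mod 2"
    then have "f 1 mod 2 = 0 \<and> f 2 mod 2 = 1 \<or> f 1 mod 2 = 1 \<and> f 2 mod 2 = 0"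
      by presburger
    then have "{f 1 mod 2, f 2 mod 2} = {0, 1 :: nat}"
      by auto
    with neq show "bij_betw (\<lambda>i. f i mod 2) {1, 2} {0, 1}"
      unfolding bij_betw_def inj_on_def by auto
  qed
  also have "\<dots> \<longleftrightarrow> odd (f 1 + f 2)" by presburger
  finally show ?thesis unfolding dom cod .
qed

lemma perm_numerical_semigroup_2_iff:
  "perm_numerical_semigroup 2 G \<longleftrightarrow>
    numerical_semigroup G \<and> G = gen {elem G 1, elem G 2} \<and>
    (\<forall>k. odd (elem G (2 * k + 1) + elem G (2 * k + 2)))"
proof -
  have "elem G ` {1..2} = {elem G 1, elem G 2}"
    by (auto simp: numeral_2_eq_2 le_Suc_eq)
  moreover have "bij_betw (\<lambda>i. elem G (k * 2 + i) mod 2) {1..2} {0..<2} \<longleftrightarrow>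
      odd (elem G (2 * k + 1) + elem G (2 * k + 2))" for k
    using bij_betw_mod_2_iff[of "\<lambda>i. elem G (k * 2 + i)"] by (simp add: mult.commute)
  ultimately show ?thesis
    unfolding perm_numerical_semigroup_def by simp
qed

lemma gen_1_2: "gen {1, 2} = UNIV"
  by (auto simp: gen_pair_iff) presburger

lemma gen_2_3: "gen {2, 3} = UNIV - {1}"
  by (auto simp: gen_pair_iff) presburger+

lemma gen_3_4: "gen {3, 4} = UNIV - {1, 2, 5}"
  by (auto simp: gen_pair_iff) presburger+

lemma perm_numerical_semigroup_2_gen_1_2: "perm_numerical_semigroup 2 (gen {1, 2})"
proof -
  have ns: "numerical_semigroup (gen {1, 2})"
    by (rule numerical_semigroup_genI) (unfold gen_1_2, simp)
  have "elem (gen {1, 2}) 1 = 1"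
    using elem_gen_pair_1_2 by simp
  moreover have "{1..} \<subseteq> gen {1, 2}"
    unfolding gen_1_2 by simp
  ultimately have e: "elem (gen {1, 2}) (1 + n) = 1 + n" for n
    by (rule elem_shift)
  have "elem (gen {1, 2}) 1 = 1" "elem (gen {1, 2}) 2 = 2"
    using e[of 0] e[of 1] by (simp_all add: numeral_2_eq_2)
  moreover have "odd (elem (gen {1, 2}) (2 * k + 1) + elem (gen {1, 2}) (2 * k + 2))" for k
    using e[of "2 * k"] e[of "2 * k + 1"] by (simp add: ac_simps)
  ultimately show ?thesis
    using ns unfolding perm_numerical_semigroup_2_iff by simp
qed

lemma perm_numerical_semigroup_2_gen_2_3: "perm_numerical_semigroup 2 (gen {2, 3})"
proof -
  have ns: "numerical_semigroup (gen {2, 3})"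
    by (rule numerical_semigroup_genI) (unfold gen_2_3, simp add: Diff_Diff_Int)
  have "elem (gen {2, 3}) 1 = 2"
    using elem_gen_pair_1_2 by simp
  moreover have "{2..} \<subseteq> gen {2, 3}"
    unfolding gen_2_3 by auto
  ultimately have e: "elem (gen {2, 3}) (1 + n) = 2 + n" for n
    by (rule elem_shift)
  have "elem (gen {2, 3}) 1 = 2" "elem (gen {2, 3}) 2 = 3"
    using e[of 0] e[of 1] by (simp_all add: numeral_2_eq_2)
  moreover have "odd (elem (gen {2, 3}) (2 * k + 1) + elem (gen {2, 3}) (2 * k + 2))" for k
    using e[of "2 * k"] e[of "2 * k + 1"] by (simp add: ac_simps)
  ultimately show ?thesis
    using ns unfolding perm_numerical_semigroup_2_iff by simp
qed

lemma perm_numerical_semigroup_2_gen_3_4: "perm_numerical_semigroup 2 (gen {3, 4})"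
proof -
  have ns: "numerical_semigroup (gen {3, 4})"
    by (rule numerical_semigroup_genI) (unfold gen_3_4, simp add: Diff_Diff_Int)
  have e1: "elem (gen {3, 4}) 1 = 3" and e2: "elem (gen {3, 4}) 2 = 4"
    using elem_gen_pair_1_2[of 3 4] by simp_all
  have "elem (gen {3, 4}) 3 = 6"
    using elem_gen_pair_3_4[of 3 4] by simp
  moreover have "{6..} \<subseteq> gen {3, 4}"
    unfolding gen_3_4 by auto
  ultimately have e: "elem (gen {3, 4}) (3 + n) = 6 + n" for n
    by (rule elem_shift)
  have "odd (elem (gen {3, 4}) (2 * k + 1) + elem (gen {3, 4}) (2 * k + 2))" for k
  proof (cases k)
    case 0
    show ?thesis unfolding 0 mult_0_right add_0 e1 e2 by simp
  next
    case (Suc j)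
    then have idx: "2 * k + 1 = 3 + 2 * j" "2 * k + 2 = 3 + (2 * j + 1)" by simp_all
    show ?thesis unfolding idx e by simp
  qed
  then show ?thesis
    using ns e1 e2 unfolding perm_numerical_semigroup_2_iff by simp
qed

theorem mainTheorem1:
  assumes "numerical_semigroup G"
  shows "perm_numerical_semigroup 2 G \<longleftrightarrow>
           G = gen {1, 2} \<or> G = gen {2, 3} \<or> G = gen {3, 4}"
proof
  assume "perm_numerical_semigroup 2 G"
  define a where "a = elem G 1"
  define b where "b = elem G 2"
  from \<open>perm_numerical_semigroup 2 G\<close> have G: "G = gen {a, b}"
    and alt_G: "\<forall>k. odd (elem G (2 * k + 1) + elem G (2 * k + 2))"
    unfolding perm_numerical_semigroup_2_iff a_def b_def by blast+
  have alt: "\<forall>k. odd (elem (gen {a, b}) (2 * k + 1) + elem (gen {a, b}) (2 * k + 2))"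
    using alt_G unfolding G .
  have "elem G 0 = 0"
    using assms elem_0 unfolding numerical_semigroup_def by blast
  moreover have "elem G 0 < a" "a < b"
    using numerical_semigroup_infinite[OF assms] unfolding a_def b_def elem_def by simp_all
  ultimately have "0 < a" "a < b" by simp_all
  moreover have "b \<le> 2 * a"
    using elem_gen_pair_1_2(2)[OF \<open>0 < a\<close> \<open>a < b\<close>] b_def[unfolded G] by simp
  moreover have "coprime a b"
    using assms G numerical_semigroup_gen_pair_coprime by simp
  ultimately have "a = 1 \<and> b = 2 \<or> a = 2 \<and> b = 3 \<or> a = 3 \<and> b = 4"
    using gen_pair_alternating_parity_cases alt by blast
  then show "G = gen {1, 2} \<or> G = gen {2, 3} \<or> G = gen {3, 4}"
    using G by auto
next
  assume "G = gen {1, 2} \<or> G = gen {2, 3} \<or> G = gen {3, 4}"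
  then show "perm_numerical_semigroup 2 G"
    using perm_numerical_semigroup_2_gen_1_2 perm_numerical_semigroup_2_gen_2_3
      perm_numerical_semigroup_2_gen_3_4 by blast
qed

end
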